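(* Let $L$ be a $\kappa$-frame and $I$ a $\kappa$-ideal of $L$. Among the congruences $D\in\mathbb{C}L$ with $\nabla_I\le D$ and $c\ell(D)\le\nabla_I$ there is a largest one, denoted $\partial_I$; it is the congruence corresponding to $\mathfrak{D}_{L/\nabla_I}$ under the correspondence between $\mathbb{C}(L/\nabla_I)$ and congruences on $L$ containing $\nabla_I$, and \[\partial_I=\{(a,b)\in L\times L\mid \text{for all } x\in L:\ a\wedge x\in I \iff b\wedge x\in I\}.\]
   Context: $\kappa$ is a fixed regular cardinal; a $\kappa$-frame is a bounded distributive lattice having joins of all subsets of cardinality $<\kappa$ and satisfying the frame distributive law for such joins. A $\kappa$-ideal is a downset in which every subset of cardinality $<\kappa$ has an upper bound. A congruence is an equivalence relation which is a sub-$\kappa$-frame of $L\times L$; $\mathbb{C}L$ is the frame of congruences under inclusion. $\nabla_a=\{(x,y)\mid x\vee a=y\vee a\}$, $\nabla_I=\bigvee_{a\in I}\nabla_a$. A congruence is closed if it is a join of congruences $\nabla_a$; $c\ell(C)$ is the largest closed congruence contained in $C$. For any $\kappa$-frame $M$, $\mathfrak{D}_M=\{(a,b)\mid \forall x\in M:\ a\wedge x=0\iff b\wedge x=0\}$, which is the largest congruence $D$ on $M$ with $c\ell(D)$ equal to the trivial (diagonal) congruence (Madden). *)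

theory Defs
  imports Main
begin

text \<open>Cardinals are represented by well-order relations (BNF cardinals of Main).
  A set S is small (of cardinality below kappa) iff |S| <o kappa.\<close>

definition small :: "'k rel \<Rightarrow> 'a set \<Rightarrow> bool" where
  "small \<kappa> S \<longleftrightarrow> (card_of S, \<kappa>) \<in> ordLess"

definition regular_cardinal :: "'k rel \<Rightarrow> bool" where
  "regular_cardinal \<kappa> \<longleftrightarrow> Cinfinite \<kappa> \<and> regularCard \<kappa>"

definition is_lub :: "'a::order set \<Rightarrow> 'a \<Rightarrow> bool" where
  "is_lub S u \<longleftrightarrow> (\<forall>s\<in>S. s \<le> u) \<and> (\<forall>v. (\<forall>s\<in>S. s \<le> v) \<longrightarrow> u \<le> v)"

definition kJoin :: "'a::order set \<Rightarrow> 'a" where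
  "kJoin S = (THE u. is_lub S u)"

definition kframe :: "'k rel \<Rightarrow> ('a::{distrib_lattice,bounded_lattice}) itself \<Rightarrow> bool" where
  "kframe \<kappa> T \<longleftrightarrow>
     (\<forall>S::'a set. small \<kappa> S \<longrightarrow> (\<exists>u. is_lub S u)) \<and>
     (\<forall>(S::'a set) x u. small \<kappa> S \<longrightarrow> is_lub S u \<longrightarrow> is_lub ((\<lambda>s. inf x s) ` S) (inf x u))"

definition kideal :: "'k rel \<Rightarrow> 'a::{distrib_lattice,bounded_lattice} set \<Rightarrow> bool" where
  "kideal \<kappa> I \<longleftrightarrow>
     (\<forall>a\<in>I. \<forall>b. b \<le> a \<longrightarrow> b \<in> I) \<and>
     (\<forall>S. S \<subseteq> I \<longrightarrow> small \<kappa> S \<longrightarrow> (\<exists>u\<in>I. \<forall>s\<in>S. s \<le> u))"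

definition kcong :: "'k rel \<Rightarrow> ('a::{distrib_lattice,bounded_lattice}) rel \<Rightarrow> bool" where
  "kcong \<kappa> C \<longleftrightarrow> equiv UNIV C \<and>
     (\<forall>a b c d. (a,b) \<in> C \<longrightarrow> (c,d) \<in> C \<longrightarrow> (inf a c, inf b d) \<in> C) \<and>
     (\<forall>S. S \<subseteq> C \<longrightarrow> small \<kappa> S \<longrightarrow> (kJoin (fst ` S), kJoin (snd ` S)) \<in> C)"

definition congJoin :: "'k rel \<Rightarrow> ('a::{distrib_lattice,bounded_lattice}) rel set \<Rightarrow> 'a rel" where
  "congJoin \<kappa> F = \<Inter>{C. kcong \<kappa> C \<and> \<Union>F \<subseteq> C}"

definition nabla :: "'a::{distrib_lattice,bounded_lattice} \<Rightarrow> 'a rel" where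
  "nabla a = {(x,y). sup x a = sup y a}"

definition nablaI :: "'k rel \<Rightarrow> 'a::{distrib_lattice,bounded_lattice} set \<Rightarrow> 'a rel" where
  "nablaI \<kappa> I = congJoin \<kappa> (nabla ` I)"

definition closed_cong :: "'k rel \<Rightarrow> ('a::{distrib_lattice,bounded_lattice}) rel \<Rightarrow> bool" where
  "closed_cong \<kappa> C \<longleftrightarrow> kcong \<kappa> C \<and> (\<exists>A. C = congJoin \<kappa> (nabla ` A))"

definition cl :: "'k rel \<Rightarrow> ('a::{distrib_lattice,bounded_lattice}) rel \<Rightarrow> 'a rel" where
  "cl \<kappa> C = (GREATEST D. closed_cong \<kappa> D \<and> D \<subseteq> C)"

definition madden :: "'b set \<Rightarrow> ('b \<Rightarrow> 'b \<Rightarrow> 'b) \<Rightarrow> 'b \<Rightarrow> 'b rel" where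
  "madden M meet z = {(a,b). a \<in> M \<and> b \<in> M \<and> (\<forall>x\<in>M. meet a x = z \<longleftrightarrow> meet b x = z)}"

text \<open>The quotient kappa-frame L/C: carrier UNIV // C, operations induced on classes.\<close>

definition qmeet :: "('a::{distrib_lattice,bounded_lattice}) rel \<Rightarrow> 'a set \<Rightarrow> 'a set \<Rightarrow> 'a set" where
  "qmeet C X Y = C `` {inf (SOME a. a \<in> X) (SOME b. b \<in> Y)}"

definition qbot :: "('a::{distrib_lattice,bounded_lattice}) rel \<Rightarrow> 'a set" where
  "qbot C = C `` {bot}"

text \<open>Correspondence between congruences on L/C and congruences on L containing C.\<close>

definition pullback_cong :: "'a rel \<Rightarrow> 'a set rel \<Rightarrow> 'a rel" where
  "pullback_cong C E = {(a,b). (C `` {a}, C `` {b}) \<in> E}"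

end

theory Submission
  imports Defs
begin

text \<open>Concretely, \<open>\<nabla>\<^sub>I\<close> relates \<open>x, y\<close> iff \<open>x \<squnion> a = y \<squnion> a\<close> for some \<open>a \<in> I\<close>, so its bottom class is
  \<open>I\<close>. For any congruence \<open>D\<close> one has \<open>(c, \<bottom>) \<in> D\<close> iff \<open>\<nabla>\<^sub>c \<subseteq> D\<close>, hence \<open>cl(D)\<close> has the same
  bottom class as \<open>D\<close>. So if \<open>\<nabla>\<^sub>I \<subseteq> D\<close> and \<open>cl(D) \<subseteq> \<nabla>\<^sub>I\<close>, the bottom class of \<open>D\<close> is \<open>I\<close>, and
  \<open>(a, b) \<in> D\<close> gives \<open>(a \<sqinter> x, b \<sqinter> x) \<in> D\<close>, whence \<open>a \<sqinter> x \<in> I \<longleftrightarrow> b \<sqinter> x \<in> I\<close>: \<open>D \<subseteq> \<partial>\<^sub>I\<close>.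
  Conversely \<open>\<partial>\<^sub>I\<close> is a congruence (a small join meets \<open>x\<close> inside \<open>I\<close> iff each joinand does,
  by distributivity and the boundedness of small subsets of \<open>I\<close>) with bottom class \<open>I\<close>.
  In the quotient \<open>L/\<nabla>\<^sub>I\<close> the zero is the class \<open>I\<close>, so Madden's condition pulls back to the
  defining condition of \<open>\<partial>\<^sub>I\<close>.\<close>

lemma small_finite: "regular_cardinal \<kappa> \<Longrightarrow> finite S \<Longrightarrow> small \<kappa> S"
  unfolding regular_cardinal_def small_def
  by (metis Cfinite_ordLess_Cinfinite Field_card_of card_of_Card_order cfinite_def)

lemma small_image: "small \<kappa> S \<Longrightarrow> small \<kappa> (f ` S)"
  unfolding small_def using card_of_image ordLeq_ordLess_trans by blast

lemma is_lub_unique: "is_lub S u \<Longrightarrow> is_lub S v \<Longrightarrow> u = v"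
  unfolding is_lub_def by (meson order_antisym)

lemma kJoin_eqI: "is_lub S u \<Longrightarrow> kJoin S = u"
  unfolding kJoin_def using is_lub_unique by (metis theI)

lemma kJoin_pair: "kJoin {a, b} = sup a (b::'a::lattice)"
  by (rule kJoin_eqI) (auto simp: is_lub_def)

lemma lub_le_sup_if_sup_eq:
  assumes "is_lub (X ` S) l" "is_lub (Y ` S) r" "\<And>s. s \<in> S \<Longrightarrow> sup (X s) u = sup (Y s) u"
  shows "l \<le> sup (r::'a::lattice) u"
proof -
  have "X s \<le> sup r u" if "s \<in> S" for s
  proof -
    have "Y s \<le> r" using assms(2) that unfolding is_lub_def by blast
    have "X s \<le> sup (X s) u" by simp
    also have "\<dots> = sup (Y s) u" by (rule assms(3)[OF that])
    also have "\<dots> \<le> sup r u" using \<open>Y s \<le> r\<close> by (rule sup_mono) simp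
    finally show ?thesis .
  qed
  then show ?thesis using assms(1) unfolding is_lub_def by blast
qed

lemma kcongI:
  assumes "equiv UNIV C"
    and "\<And>a b c d. (a,b) \<in> C \<Longrightarrow> (c,d) \<in> C \<Longrightarrow> (inf a c, inf b d) \<in> C"
    and "\<And>S. S \<subseteq> C \<Longrightarrow> small \<kappa> S \<Longrightarrow> (kJoin (fst ` S), kJoin (snd ` S)) \<in> C"
  shows "kcong \<kappa> C"
  unfolding kcong_def using assms by simp

lemma kcong_equiv: "kcong \<kappa> C \<Longrightarrow> equiv UNIV C"
  unfolding kcong_def by blast

lemma kcong_refl: "kcong \<kappa> C \<Longrightarrow> (a,a) \<in> C"
  unfolding kcong_def equiv_def refl_on_def by blast

lemma kcong_sym: "kcong \<kappa> C \<Longrightarrow> (a,b) \<in> C \<Longrightarrow> (b,a) \<in> C"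
  unfolding kcong_def equiv_def sym_def by blast

lemma kcong_trans: "kcong \<kappa> C \<Longrightarrow> (a,b) \<in> C \<Longrightarrow> (b,c) \<in> C \<Longrightarrow> (a,c) \<in> C"
  unfolding kcong_def equiv_def trans_def by blast

lemma kcong_inf: "kcong \<kappa> C \<Longrightarrow> (a,b) \<in> C \<Longrightarrow> (c,d) \<in> C \<Longrightarrow> (inf a c, inf b d) \<in> C"
  unfolding kcong_def by blast

lemma kcong_kJoin:
  "kcong \<kappa> C \<Longrightarrow> S \<subseteq> C \<Longrightarrow> small \<kappa> S \<Longrightarrow> (kJoin (fst ` S), kJoin (snd ` S)) \<in> C"
  unfolding kcong_def by blast

lemma kcong_sup:
  assumes "regular_cardinal \<kappa>" "kcong \<kappa> C" "(a,b) \<in> C" "(c,d) \<in> C"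
  shows "(sup a c, sup b d) \<in> C"
proof -
  have "small \<kappa> {(a,b),(c,d)}" by (rule small_finite[OF assms(1)]) simp
  moreover have "{(a,b),(c,d)} \<subseteq> C" using assms(3,4) by simp
  ultimately have "(kJoin (fst ` {(a,b),(c,d)}), kJoin (snd ` {(a,b),(c,d)})) \<in> C"
    using kcong_kJoin[OF assms(2)] by blast
  then show ?thesis by (simp add: kJoin_pair)
qed

lemma congJoin_kcong: "kcong \<kappa> (congJoin \<kappa> F)"
proof (unfold congJoin_def, rule kcongI)
  let ?A = "{C. kcong \<kappa> C \<and> \<Union>F \<subseteq> C}"
  show "equiv UNIV (\<Inter>?A)"
  proof (rule equivI)
    show "refl_on UNIV (\<Inter>?A)" by (rule refl_onI) (use kcong_refl in blast)
    show "sym (\<Inter>?A)" by (rule symI) (use kcong_sym in blast)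
    show "trans (\<Inter>?A)" by (rule transI) (use kcong_trans in blast)
  qed simp
  show "(inf a c, inf b d) \<in> \<Inter>?A" if "(a,b) \<in> \<Inter>?A" "(c,d) \<in> \<Inter>?A" for a b c d
  proof
    fix C assume "C \<in> ?A"
    then show "(inf a c, inf b d) \<in> C" using that kcong_inf by blast
  qed
  show "(kJoin (fst ` S), kJoin (snd ` S)) \<in> \<Inter>?A" if "S \<subseteq> \<Inter>?A" "small \<kappa> S" for S
  proof
    fix C assume "C \<in> ?A"
    then have "kcong \<kappa> C" "S \<subseteq> C" using that(1) by auto
    then show "(kJoin (fst ` S), kJoin (snd ` S)) \<in> C" using that(2) by (rule kcong_kJoin)
  qed
qed

lemma congJoin_upper: "\<Union>F \<subseteq> congJoin \<kappa> F"
  unfolding congJoin_def by blast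

lemma congJoin_least: "kcong \<kappa> C \<Longrightarrow> \<Union>F \<subseteq> C \<Longrightarrow> congJoin \<kappa> F \<subseteq> C"
  unfolding congJoin_def by blast

lemma congJoin_nabla_mono: "A \<subseteq> B \<Longrightarrow> congJoin \<kappa> (nabla ` A) \<subseteq> congJoin \<kappa> (nabla ` B)"
  by (rule congJoin_least[OF congJoin_kcong]) (use congJoin_upper[of "nabla ` B"] in blast)

lemma bot_in_nabla: "(a, bot) \<in> nabla a"
  unfolding nabla_def by simp

lemma nabla_subset_iff:
  assumes "regular_cardinal \<kappa>" "kcong \<kappa> C"
  shows "nabla c \<subseteq> C \<longleftrightarrow> (c, bot) \<in> C"
proof
  assume cb: "(c, bot) \<in> C"
  show "nabla c \<subseteq> C"
  proof (clarify)
    fix y z assume "(y, z) \<in> nabla c"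
    then have eq: "sup y c = sup z c" unfolding nabla_def by simp
    have "(sup y c, y) \<in> C" "(sup z c, z) \<in> C"
      using kcong_sup[OF assms kcong_refl[OF assms(2)] cb] by simp_all
    then have "(y, sup z c) \<in> C" "(sup z c, z) \<in> C"
      using kcong_sym[OF assms(2)] eq by auto
    then show "(y, z) \<in> C" by (rule kcong_trans[OF assms(2)])
  qed
qed (use bot_in_nabla in blast)

lemma cl_eq:
  assumes "regular_cardinal \<kappa>" "kcong \<kappa> C"
  shows "cl \<kappa> C = congJoin \<kappa> (nabla ` {a. (a, bot) \<in> C})"
proof -
  let ?G = "congJoin \<kappa> (nabla ` {a. (a, bot) \<in> C})"
  have "?G \<subseteq> C"
    by (rule congJoin_least[OF assms(2)]) (use nabla_subset_iff[OF assms] in blast)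
  moreover have "D \<subseteq> ?G" if "closed_cong \<kappa> D" "D \<subseteq> C" for D
  proof -
    obtain A where A: "D = congJoin \<kappa> (nabla ` A)"
      using \<open>closed_cong \<kappa> D\<close> unfolding closed_cong_def by blast
    have "A \<subseteq> {a. (a, bot) \<in> C}"
      using \<open>D \<subseteq> C\<close> congJoin_upper[of "nabla ` A"] bot_in_nabla unfolding A by blast
    then show ?thesis unfolding A by (rule congJoin_nabla_mono)
  qed
  moreover have "closed_cong \<kappa> ?G" unfolding closed_cong_def using congJoin_kcong by blast
  ultimately show ?thesis unfolding cl_def by (intro Greatest_equality) auto
qed

lemma cl_subset:
  assumes "regular_cardinal \<kappa>" "kcong \<kappa> C"
  shows "cl \<kappa> C \<subseteq> C"
  unfolding cl_eq[OF assms]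
  by (rule congJoin_least[OF assms(2)]) (use nabla_subset_iff[OF assms] in blast)

lemma cl_bot_iff:
  assumes "regular_cardinal \<kappa>" "kcong \<kappa> C"
  shows "(c, bot) \<in> cl \<kappa> C \<longleftrightarrow> (c, bot) \<in> C"
proof
  assume "(c, bot) \<in> C"
  then have "(c, bot) \<in> \<Union>(nabla ` {a. (a, bot) \<in> C})" using bot_in_nabla by blast
  then show "(c, bot) \<in> cl \<kappa> C"
    unfolding cl_eq[OF assms] using congJoin_upper[of "nabla ` {a. (a, bot) \<in> C}" \<kappa>] by blast
qed (use cl_subset[OF assms] in blast)

lemma qmeet_class:
  assumes "kcong \<kappa> C"
  shows "qmeet C (C``{a}) (C``{b}) = C``{inf a b}"
proof -
  let ?a = "SOME a'. a' \<in> C``{a}" and ?b = "SOME b'. b' \<in> C``{b}"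
  have "a \<in> C``{a}" "b \<in> C``{b}" using kcong_refl[OF assms] by auto
  then have "?a \<in> C``{a}" "?b \<in> C``{b}" by (metis someI)+
  then have "(inf a b, inf ?a ?b) \<in> C" using kcong_inf[OF assms] by blast
  then have "C``{inf a b} = C``{inf ?a ?b}" by (rule equiv_class_eq[OF kcong_equiv[OF assms]])
  then show ?thesis unfolding qmeet_def by simp
qed

lemma pullback_madden:
  assumes "kcong \<kappa> C"
  shows "pullback_cong C (madden (UNIV // C) (qmeet C) (qbot C))
    = {(a,b). \<forall>x. (inf a x, bot) \<in> C \<longleftrightarrow> (inf b x, bot) \<in> C}"
proof -
  have zero: "qmeet C (C``{a}) (C``{x}) = qbot C \<longleftrightarrow> (inf a x, bot) \<in> C" for a x
    unfolding qmeet_class[OF assms] qbot_def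
    by (simp add: eq_equiv_class_iff[OF kcong_equiv[OF assms]])
  have "(\<forall>X\<in>UNIV // C. qmeet C (C``{a}) X = qbot C \<longleftrightarrow> qmeet C (C``{b}) X = qbot C)
      \<longleftrightarrow> (\<forall>x. (inf a x, bot) \<in> C \<longleftrightarrow> (inf b x, bot) \<in> C)" for a b
    unfolding quotient_def by (simp add: zero)
  then show ?thesis
    unfolding pullback_cong_def madden_def by (simp add: quotientI)
qed

definition ideal_cong :: "'a::{distrib_lattice,bounded_lattice} set \<Rightarrow> 'a rel" where
  "ideal_cong I = {(x,y). \<exists>a\<in>I. sup x a = sup y a}"

definition partial_cong :: "'a::{distrib_lattice,bounded_lattice} set \<Rightarrow> 'a rel" where
  "partial_cong I = {(a,b). \<forall>x. inf a x \<in> I \<longleftrightarrow> inf b x \<in> I}"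

context
  fixes \<kappa> :: "'k rel" and I :: "'a::{distrib_lattice,bounded_lattice} set"
  assumes reg: "regular_cardinal \<kappa>"
    and fr: "kframe \<kappa> TYPE('a)"
    and ideal: "kideal \<kappa> I"
begin

lemma kideal_down: "a \<in> I \<Longrightarrow> b \<le> a \<Longrightarrow> b \<in> I"
  using ideal unfolding kideal_def by blast

lemma kideal_bound: "S \<subseteq> I \<Longrightarrow> small \<kappa> S \<Longrightarrow> \<exists>u\<in>I. \<forall>s\<in>S. s \<le> u"
  using ideal unfolding kideal_def by blast

lemma kideal_bot: "bot \<in> I"
  using kideal_bound[of "{}"] small_finite[OF reg] kideal_down by fastforce

lemma kideal_sup: "a \<in> I \<Longrightarrow> b \<in> I \<Longrightarrow> sup a b \<in> I"
  using kideal_bound[of "{a,b}"] small_finite[OF reg, of "{a,b}"] kideal_down by auto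

lemma lub_exists: "small \<kappa> S \<Longrightarrow> \<exists>u. is_lub (S::'a set) u"
  using fr unfolding kframe_def by blast

lemma lub_inf_distrib: "small \<kappa> S \<Longrightarrow> is_lub (S::'a set) u \<Longrightarrow> is_lub ((\<lambda>s. inf x s) ` S) (inf x u)"
  using fr unfolding kframe_def by blast

lemma ideal_cong_bot_iff: "(c, bot) \<in> ideal_cong I \<longleftrightarrow> c \<in> I"
proof
  assume "(c, bot) \<in> ideal_cong I"
  then obtain a where "a \<in> I" "sup c a = a" unfolding ideal_cong_def by auto
  then show "c \<in> I" using kideal_down by (simp add: le_iff_sup)
next
  assume "c \<in> I"
  then show "(c, bot) \<in> ideal_cong I" unfolding ideal_cong_def by force
qed

lemma ideal_cong_common_witness:
  assumes "S \<subseteq> ideal_cong I" "small \<kappa> S"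
  obtains u where "u \<in> I" "\<And>s. s \<in> S \<Longrightarrow> sup (fst s) u = sup (snd s) u"
proof -
  have "\<forall>s\<in>S. \<exists>a\<in>I. sup (fst s) a = sup (snd s) a"
    using assms(1) unfolding ideal_cong_def by auto
  then obtain f where f: "\<And>s. s \<in> S \<Longrightarrow> f s \<in> I \<and> sup (fst s) (f s) = sup (snd s) (f s)"
    by metis
  then obtain u where u: "u \<in> I" "\<And>s. s \<in> S \<Longrightarrow> f s \<le> u"
    using kideal_bound[of "f ` S"] small_image[OF assms(2)] by blast
  have "sup (fst s) u = sup (snd s) u" if "s \<in> S" for s
  proof -
    have "sup (fst s) u = sup (sup (fst s) (f s)) u"
      using u(2)[OF that] by (simp add: sup_assoc sup_absorb2)
    also have "\<dots> = sup (sup (snd s) (f s)) u" using f[OF that] by simp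
    also have "\<dots> = sup (snd s) u" using u(2)[OF that] by (simp add: sup_assoc sup_absorb2)
    finally show ?thesis .
  qed
  then show thesis using that u(1) by blast
qed

lemma ideal_cong_equiv: "equiv UNIV (ideal_cong I)"
proof (rule equivI)
  show "refl_on UNIV (ideal_cong I)"
    using kideal_bot by (intro refl_onI) (auto simp: ideal_cong_def)
  show "sym (ideal_cong I)"
  proof (rule symI)
    fix x y assume "(x, y) \<in> ideal_cong I"
    then obtain a where "a \<in> I" "sup y a = sup x a" unfolding ideal_cong_def by auto
    then show "(y, x) \<in> ideal_cong I" unfolding ideal_cong_def by blast
  qed
  show "trans (ideal_cong I)"
  proof (rule transI)
    fix x y z assume "(x, y) \<in> ideal_cong I" "(y, z) \<in> ideal_cong I"
    then obtain a b where "a \<in> I" "b \<in> I" and xy: "sup x a = sup y a" and yz: "sup y b = sup z b"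
      unfolding ideal_cong_def by auto
    have "sup x (sup a b) = sup (sup x a) b" by (simp add: sup_assoc)
    also have "\<dots> = sup (sup y b) a" unfolding xy by (simp add: ac_simps)
    also have "\<dots> = sup z (sup a b)" unfolding yz by (simp add: ac_simps)
    finally have "sup x (sup a b) = sup z (sup a b)" .
    moreover have "sup a b \<in> I" using \<open>a \<in> I\<close> \<open>b \<in> I\<close> by (rule kideal_sup)
    ultimately show "(x, z) \<in> ideal_cong I" unfolding ideal_cong_def by blast
  qed
qed simp

lemma ideal_cong_inf:
  assumes "(a,b) \<in> ideal_cong I" "(c,d) \<in> ideal_cong I"
  shows "(inf a c, inf b d) \<in> ideal_cong I"
proof -
  have "{(a,b),(c,d)} \<subseteq> ideal_cong I" using assms by simp
  moreover have "small \<kappa> {(a,b),(c,d)}" by (rule small_finite[OF reg]) simp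
  ultimately obtain u where u: "u \<in> I" "\<And>s. s \<in> {(a,b),(c,d)} \<Longrightarrow> sup (fst s) u = sup (snd s) u"
    using ideal_cong_common_witness by blast
  have "sup (inf a c) u = inf (sup a u) (sup c u)" by (rule sup_inf_distrib2)
  also have "\<dots> = inf (sup b u) (sup d u)" using u(2)[of "(a,b)"] u(2)[of "(c,d)"] by simp
  also have "\<dots> = sup (inf b d) u" by (rule sup_inf_distrib2[symmetric])
  finally show ?thesis unfolding ideal_cong_def using u(1) by blast
qed

lemma ideal_cong_kJoin:
  assumes S: "S \<subseteq> ideal_cong I" "small \<kappa> S"
  shows "(kJoin (fst ` S), kJoin (snd ` S)) \<in> ideal_cong I"
proof -
  obtain u where u: "u \<in> I" "\<And>s. s \<in> S \<Longrightarrow> sup (fst s) u = sup (snd s) u"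
    using ideal_cong_common_witness[OF S] by blast
  obtain l where l: "is_lub (fst ` S) l" using lub_exists[OF small_image[OF S(2)]] by blast
  obtain r where r: "is_lub (snd ` S) r" using lub_exists[OF small_image[OF S(2)]] by blast
  have "l \<le> sup r u" by (rule lub_le_sup_if_sup_eq[OF l r u(2)])
  moreover have "r \<le> sup l u" by (rule lub_le_sup_if_sup_eq[OF r l u(2)[symmetric]])
  ultimately have "sup l u = sup r u" by (simp add: order_antisym)
  then show ?thesis unfolding ideal_cong_def kJoin_eqI[OF l] kJoin_eqI[OF r] using u(1) by blast
qed

lemma ideal_cong_kcong: "kcong \<kappa> (ideal_cong I)"
  by (rule kcongI[OF ideal_cong_equiv ideal_cong_inf ideal_cong_kJoin])

lemma nablaI_eq_ideal_cong: "nablaI \<kappa> I = ideal_cong I"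
proof
  show "nablaI \<kappa> I \<subseteq> ideal_cong I" unfolding nablaI_def
    by (rule congJoin_least[OF ideal_cong_kcong]) (unfold nabla_def ideal_cong_def, blast)
  show "ideal_cong I \<subseteq> nablaI \<kappa> I"
  proof clarify
    fix x y assume "(x, y) \<in> ideal_cong I"
    then obtain a where "a \<in> I" "(x, y) \<in> nabla a" unfolding ideal_cong_def nabla_def by auto
    then show "(x, y) \<in> nablaI \<kappa> I" unfolding nablaI_def using congJoin_upper[of "nabla ` I"] by blast
  qed
qed

lemma inf_lub_mem_iff:
  assumes "small \<kappa> T" "is_lub T l"
  shows "inf x l \<in> I \<longleftrightarrow> (\<forall>t\<in>T. inf x t \<in> I)"
proof
  assume "inf x l \<in> I"
  moreover have "inf x t \<le> inf x l" if "t \<in> T" for t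
    using assms(2) that unfolding is_lub_def by (blast intro: inf_mono)
  ultimately show "\<forall>t\<in>T. inf x t \<in> I" using kideal_down by blast
next
  assume "\<forall>t\<in>T. inf x t \<in> I"
  then obtain u where "u \<in> I" "\<forall>t\<in>(\<lambda>t. inf x t) ` T. t \<le> u"
    using kideal_bound[of "(\<lambda>t. inf x t) ` T"] small_image[OF assms(1)] by blast
  moreover have "is_lub ((\<lambda>t. inf x t) ` T) (inf x l)" by (rule lub_inf_distrib[OF assms])
  ultimately show "inf x l \<in> I" using kideal_down unfolding is_lub_def by blast
qed

lemma partial_cong_equiv: "equiv UNIV (partial_cong I)"
  unfolding partial_cong_def by (rule equivI) (auto intro!: refl_onI symI transI)

lemma partial_cong_inf:
  assumes "(a,b) \<in> partial_cong I" "(c,d) \<in> partial_cong I"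
  shows "(inf a c, inf b d) \<in> partial_cong I"
proof (clarsimp simp: partial_cong_def)
  fix x
  have "inf (inf a c) x \<in> I \<longleftrightarrow> inf a (inf c x) \<in> I" by (simp add: inf_assoc)
  also have "\<dots> \<longleftrightarrow> inf b (inf c x) \<in> I" using assms(1) by (simp add: partial_cong_def)
  also have "\<dots> \<longleftrightarrow> inf c (inf b x) \<in> I" by (simp add: inf_left_commute)
  also have "\<dots> \<longleftrightarrow> inf d (inf b x) \<in> I" using assms(2) by (simp add: partial_cong_def)
  also have "\<dots> \<longleftrightarrow> inf (inf b d) x \<in> I" by (simp add: inf_assoc inf_left_commute)
  finally show "inf (inf a c) x \<in> I \<longleftrightarrow> inf (inf b d) x \<in> I" .
qed

lemma partial_cong_kJoin:
  assumes S: "S \<subseteq> partial_cong I" "small \<kappa> S"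
  shows "(kJoin (fst ` S), kJoin (snd ` S)) \<in> partial_cong I"
proof -
  obtain l where l: "is_lub (fst ` S) l" using lub_exists[OF small_image[OF S(2)]] by blast
  obtain r where r: "is_lub (snd ` S) r" using lub_exists[OF small_image[OF S(2)]] by blast
  have "inf x l \<in> I \<longleftrightarrow> inf x r \<in> I" for x
  proof -
    have "\<forall>s\<in>S. inf x (fst s) \<in> I \<longleftrightarrow> inf x (snd s) \<in> I"
      using S(1) unfolding partial_cong_def by (auto simp: inf_commute)
    then show ?thesis
      using inf_lub_mem_iff[OF small_image[OF S(2)] l, of x]
        inf_lub_mem_iff[OF small_image[OF S(2)] r, of x] by simp
  qed
  then show ?thesis
    unfolding partial_cong_def kJoin_eqI[OF l] kJoin_eqI[OF r] by (simp add: inf_commute)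
qed

lemma partial_cong_kcong: "kcong \<kappa> (partial_cong I)"
  by (rule kcongI[OF partial_cong_equiv partial_cong_inf partial_cong_kJoin])

lemma partial_cong_bot_iff: "(c, bot) \<in> partial_cong I \<longleftrightarrow> c \<in> I"
  unfolding partial_cong_def using kideal_bot kideal_down by (auto dest: spec[of _ top])

lemma partial_cong_sup_ideal:
  assumes "a \<in> I"
  shows "(y, sup y a) \<in> partial_cong I"
proof -
  have "sup (inf y x) (inf a x) \<in> I \<longleftrightarrow> inf y x \<in> I" for x
    using kideal_down[OF assms, of "inf a x"] kideal_sup[of "inf y x" "inf a x"]
      kideal_down[of "sup (inf y x) (inf a x)" "inf y x"] by auto
  then show ?thesis unfolding partial_cong_def by (simp add: inf_sup_distrib2)
qed

lemma ideal_cong_le_partial_cong: "ideal_cong I \<subseteq> partial_cong I"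
proof (clarify)
  fix y z assume "(y, z) \<in> ideal_cong I"
  then obtain a where "a \<in> I" "sup y a = sup z a" unfolding ideal_cong_def by blast
  then have "(y, sup z a) \<in> partial_cong I" "(z, sup z a) \<in> partial_cong I"
    using partial_cong_sup_ideal[of a y] partial_cong_sup_ideal[of a z] by simp_all
  then show "(y, z) \<in> partial_cong I"
    using kcong_trans[OF partial_cong_kcong] kcong_sym[OF partial_cong_kcong] by blast
qed

lemma cl_partial_cong_le: "cl \<kappa> (partial_cong I) \<subseteq> ideal_cong I"
proof -
  have "cl \<kappa> (partial_cong I) \<subseteq> congJoin \<kappa> (nabla ` I)"
    unfolding cl_eq[OF reg partial_cong_kcong] partial_cong_bot_iff
    by (rule congJoin_nabla_mono) blast
  then show ?thesis using nablaI_eq_ideal_cong unfolding nablaI_def by simp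
qed

lemma partial_cong_greatest:
  assumes D: "kcong \<kappa> D" and "ideal_cong I \<subseteq> D" and "cl \<kappa> D \<subseteq> ideal_cong I"
  shows "D \<subseteq> partial_cong I"
proof -
  have bot_class: "(c, bot) \<in> D \<longleftrightarrow> c \<in> I" for c
    using assms ideal_cong_bot_iff cl_bot_iff[OF reg D] by blast
  have transfer: "inf b x \<in> I" if "(a,b) \<in> D" "inf a x \<in> I" for a b x
  proof -
    have "(inf b x, inf a x) \<in> D" using kcong_sym[OF D kcong_inf[OF D that(1) kcong_refl[OF D]]] .
    moreover have "(inf a x, bot) \<in> D" using that(2) bot_class by blast
    ultimately show ?thesis using bot_class kcong_trans[OF D] by blast
  qed
  show ?thesis
  proof clarify
    fix a b assume "(a, b) \<in> D"
    with transfer[of a b] transfer[of b a] kcong_sym[OF D] show "(a, b) \<in> partial_cong I"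
      unfolding partial_cong_def by blast
  qed
qed

lemma partial_cong_eq_pullback:
  "partial_cong I = pullback_cong (ideal_cong I)
     (madden (UNIV // ideal_cong I) (qmeet (ideal_cong I)) (qbot (ideal_cong I)))"
  unfolding pullback_madden[OF ideal_cong_kcong] ideal_cong_bot_iff partial_cong_def ..

end

theorem mainTheorem6:
  fixes \<kappa> :: "'k rel" and I :: "('a::{distrib_lattice,bounded_lattice}) set"
  assumes "regular_cardinal \<kappa>"
    and "kframe \<kappa> TYPE('a)"
    and "kideal \<kappa> I"
  defines "P \<equiv> {(a,b). \<forall>x. (inf a x \<in> I \<longleftrightarrow> inf b x \<in> I)}"
  shows "kcong \<kappa> P \<and> nablaI \<kappa> I \<subseteq> P \<and> cl \<kappa> P \<subseteq> nablaI \<kappa> I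
    \<and> (\<forall>D. kcong \<kappa> D \<and> nablaI \<kappa> I \<subseteq> D \<and> cl \<kappa> D \<subseteq> nablaI \<kappa> I \<longrightarrow> D \<subseteq> P)
    \<and> P = pullback_cong (nablaI \<kappa> I)
            (madden (UNIV // nablaI \<kappa> I) (qmeet (nablaI \<kappa> I)) (qbot (nablaI \<kappa> I)))"
proof -
  have P: "P = partial_cong I" unfolding P_def partial_cong_def ..
  show ?thesis
    unfolding P nablaI_eq_ideal_cong[OF assms(1-3)]
    using partial_cong_kcong[OF assms(1-3)] ideal_cong_le_partial_cong[OF assms(1-3)]
      cl_partial_cong_le[OF assms(1-3)] partial_cong_greatest[OF assms(1-3)]
      partial_cong_eq_pullback[OF assms(1-3)]
    by blast
qed

end
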